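(* Let $f$ be a function on $\mathcal{X}\times\mathcal{Y}$, let $\mu_0,\mu_1$ be distributions on $\mathcal{X}\times\mathcal{Y}$, $\mu=\frac12\mu_0+\frac12\mu_1$, and let $\nu=\lambda\mu_0+(1-\lambda)\mu_1$ for some $\lambda\in[0,1]$. Then for every $\varepsilon\ge0$, $\mathrm{IC}^{\mathrm{internal}}_{\nu}[f,2\varepsilon]\le 2\,\mathrm{IC}^{\mathrm{internal}}_{\mu}[f,\varepsilon]+6$.
   Context: For a two-party randomized protocol $\Pi$ and $(X,Y)\sim\mu$, the internal information is $I(\Pi;X\mid Y)+I(\Pi;Y\mid X)$ (base-2 logs). $\mathrm{IC}^{\mathrm{internal}}_\mu[f,\varepsilon]$ is the infimum of the internal information over protocols $\Pi$ with $\Pr_{(x,y)\sim\mu}[\mathrm{output}(\Pi(x,y))\ne f(x,y)]\le\varepsilon$. *)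

theory Defs
  imports "HOL-Probability.Probability"
begin

text \<open>A protocol runs for a fixed number of rounds
  (shorter protocols are padded).  There is a public random seed r (drawn from pub),
  and private seeds ra (Alice, from privA) and rb (Bob, from privB), all independent
  of each other and of the inputs.  In each round, the speaker is determined by the
  public seed and the history so far; the speaker sends one bit which depends on
  her/his own input, own private seed, the public seed and the history.\<close>

record ('x, 'y, 'o) protocol =
  rounds :: nat
  pub :: "nat pmf"
  privA :: "nat pmf"
  privB :: "nat pmf"
  alice_speaks :: "nat \<Rightarrow> bool list \<Rightarrow> bool"
  msgA :: "'x \<Rightarrow> nat \<Rightarrow> nat \<Rightarrow> bool list \<Rightarrow> bool"
  msgB :: "'y \<Rightarrow> nat \<Rightarrow> nat \<Rightarrow> bool list \<Rightarrow> bool"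
  outp :: "nat \<Rightarrow> bool list \<Rightarrow> 'o"

fun msgs :: "('x, 'y, 'o) protocol \<Rightarrow> 'x \<Rightarrow> 'y \<Rightarrow> nat \<Rightarrow> nat \<Rightarrow> nat \<Rightarrow> nat \<Rightarrow> bool list" where
  "msgs P x y r ra rb 0 = []"
| "msgs P x y r ra rb (Suc k) =
     (let h = msgs P x y r ra rb k
      in h @ [if alice_speaks P r h then msgA P x r ra h else msgB P y r rb h])"

definition run :: "('x, 'y, 'o) protocol \<Rightarrow> ('x \<times> 'y) pmf \<Rightarrow> ('x \<times> 'y \<times> (nat \<times> bool list)) pmf" where
  "run P mu =
     bind_pmf mu (\<lambda>(x, y).
     bind_pmf (pub P) (\<lambda>r.
     bind_pmf (privA P) (\<lambda>ra.
     bind_pmf (privB P) (\<lambda>rb.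
       return_pmf (x, y, (r, msgs P x y r ra rb (rounds P)))))))"

definition cmi :: "'a pmf \<Rightarrow> ('a \<Rightarrow> 'b) \<Rightarrow> ('a \<Rightarrow> 'c) \<Rightarrow> ('a \<Rightarrow> 'd) \<Rightarrow> real" where
  "cmi D A B C = prob_space.conditional_mutual_information (measure_pmf D) 2
      (count_space UNIV) (count_space UNIV) (count_space UNIV) A B C"

definition internal_info :: "('x, 'y, 'o) protocol \<Rightarrow> ('x \<times> 'y) pmf \<Rightarrow> real" where
  "internal_info P mu =
     cmi (run P mu) (\<lambda>(x, y, t). t) (\<lambda>(x, y, t). x) (\<lambda>(x, y, t). y)
   + cmi (run P mu) (\<lambda>(x, y, t). t) (\<lambda>(x, y, t). y) (\<lambda>(x, y, t). x)"

definition err :: "('x, 'y, 'o) protocol \<Rightarrow> ('x \<times> 'y) pmf \<Rightarrow> ('x \<Rightarrow> 'y \<Rightarrow> 'o) \<Rightarrow> real" where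
  "err P mu f = measure_pmf.prob (run P mu)
     {(x, y, t). outp P (fst t) (snd t) \<noteq> f x y}"

text \<open>IC^internal_mu[f, eps]: infimum (in the extended reals, so that the infimum of
  the empty set is +infinity) of the internal information over all protocols with
  error at most eps.\<close>
definition IC_internal :: "('x \<times> 'y) pmf \<Rightarrow> ('x \<Rightarrow> 'y \<Rightarrow> 'o) \<Rightarrow> real \<Rightarrow> ereal" where
  "IC_internal mu f eps =
     Inf {ereal (internal_info P mu) | P :: ('x, 'y, 'o) protocol. err P mu f \<le> eps}"

definition mix_pmf :: "real \<Rightarrow> 'a pmf \<Rightarrow> 'a pmf \<Rightarrow> 'a pmf" where
  "mix_pmf a p q = bind_pmf (bernoulli_pmf a) (\<lambda>b. if b then p else q)"

end

theory Submission
  imports Defs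
begin

(* The same protocol serves for both distributions, since nu <= 2 mu pointwise: its error at
   most doubles.  Viewing the transcript T as the output of a channel K fed with z = (x, y), one
   has I(T;X|Y) = E_z D(K_z || Q_y), where Q_y is the law of T given Y = y.  Replacing Q_y computed
   under nu by Q_y computed under mu can only increase this expectation (Gibbs' inequality), and
   the resulting expectation of a nonnegative quantity at most doubles under nu <= 2 mu.  The term
   I(T;Y|X) is the same statement with x and y swapped. *)

no_notation Infinite_Sum.abs_summable_on (infixr \<open>abs'_summable'_on\<close> 46)

lemma abs_xlog_ratio_le:
  fixes a b C :: real
  assumes "0 \<le> a" "0 \<le> b" "a \<le> C * b" "1 \<le> C"
  shows "\<bar>a * log 2 (a / b)\<bar> \<le> a * log 2 C + b / ln 2"
proof (cases "a = 0")
  case True then show ?thesis using assms by simp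
next
  case False
  then have a: "a > 0" using assms by simp
  have b: "b > 0"
  proof (rule ccontr)
    assume "\<not> b > 0"
    then show False using assms a by simp
  qed
  have logC: "0 \<le> log 2 C" using assms by simp
  show ?thesis
  proof (cases "a / b \<ge> 1")
    case True
    then have "0 \<le> log 2 (a / b)" by simp
    moreover have "log 2 (a / b) \<le> log 2 C" using assms a b
      by (simp add: pos_divide_le_eq mult.commute)
    ultimately show ?thesis using a b
      by (simp add: abs_mult mult_left_mono add_increasing2)
  next
    case False
    then have "log 2 (a / b) < 0" using a b by simp
    then have "\<bar>a * log 2 (a / b)\<bar> = a * log 2 (b / a)" using a b
      by (simp add: abs_mult log_divide)
    also have "\<dots> = a * (ln (b / a) / ln 2)" by (simp add: log_def)
    also have "\<dots> \<le> a * ((b / a) / ln 2)"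
      using a b by (intro mult_left_mono divide_right_mono) (auto intro: less_imp_le)
    also have "\<dots> = b / ln 2" using a by simp
    moreover have "0 \<le> a * log 2 C" using logC a by simp
    ultimately show ?thesis by linarith
  qed
qed

lemma xlog_ratio_le:
  fixes a b :: real
  assumes "0 \<le> a" "0 \<le> b" "0 < a \<Longrightarrow> 0 < b"
  shows "a * log 2 (b / a) \<le> (b - a) / ln 2"
proof (cases "a = 0")
  case True then show ?thesis using assms by simp
next
  case False
  then have a: "a > 0" and b: "b > 0" using assms by auto
  have "a * log 2 (b / a) = a * ln (b / a) / ln 2" by (simp add: log_def)
  also have "\<dots> \<le> a * (b / a - 1) / ln 2"
    using a b by (intro divide_right_mono mult_left_mono ln_le_minus_one) auto
  also have "\<dots> = (b - a) / ln 2" using a by (simp add: field_simps)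
  finally show ?thesis .
qed

lemma sum_regroup_snd:
  fixes a :: "('x::finite \<times> 'y::finite) \<Rightarrow> real"
  shows "(\<Sum>y\<in>UNIV. (\<Sum>z\<in>UNIV. if snd z = y then a z else 0) * G y) = (\<Sum>z\<in>UNIV. a z * G (snd z))"
proof -
  have "(\<Sum>y\<in>UNIV. (\<Sum>z\<in>UNIV. if snd z = y then a z else 0) * G y)
      = (\<Sum>y\<in>UNIV. \<Sum>z\<in>UNIV. if snd z = y then a z * G y else 0)"
    by (auto simp: sum_distrib_right intro!: sum.cong)
  also have "\<dots> = (\<Sum>z\<in>UNIV. \<Sum>y\<in>UNIV. if snd z = y then a z * G y else 0)"
    by (rule sum.swap)
  finally show ?thesis by simp
qed

lemma distributed_map_pmf:
  "distributed (measure_pmf D) (count_space UNIV) X (\<lambda>x. ennreal (pmf (map_pmf X D) x))"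
proof -
  have "distr (measure_pmf D) (count_space UNIV) X = measure_pmf (map_pmf X D)"
    by (simp add: map_pmf_rep_eq)
  then show ?thesis unfolding distributed_def
    by (simp only: measure_pmf_eq_density[of "map_pmf X D"]) simp
qed

lemma pmf_map_pair_le_fst:
  "pmf (map_pmf (\<lambda>a. (A a, B a)) D) (t, z) \<le> pmf (map_pmf A D) t"
  unfolding pmf_map by (rule measure_pmf.finite_measure_mono) auto

lemma pmf_map_pair_le_snd:
  "pmf (map_pmf (\<lambda>a. (A a, B a)) D) (t, z) \<le> pmf (map_pmf B D) z"
  unfolding pmf_map by (rule measure_pmf.finite_measure_mono) auto

lemma pmf_map_pair_const:
  "pmf (map_pmf (\<lambda>t. (t, c)) M) (t', c') = (if c' = c then pmf M t' else 0)"
proof -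
  have "(\<lambda>t. (t, c)) -` {(t', c')} = (if c' = c then {t'} else {})" by auto
  then show ?thesis by (simp add: pmf_map measure_pmf_single)
qed

lemma pmf_map_swap: "pmf (map_pmf prod.swap p) z = pmf p (prod.swap z)"
  using pmf_map_inj'[of prod.swap p "prod.swap z"] by simp

definition mi_density :: "'a pmf \<Rightarrow> ('a \<Rightarrow> 't) \<Rightarrow> ('a \<Rightarrow> 'z) \<Rightarrow> 't \<times> 'z \<Rightarrow> real" where
  "mi_density D A B x = pmf (map_pmf (\<lambda>a. (A a, B a)) D) x *
      log 2 (pmf (map_pmf (\<lambda>a. (A a, B a)) D) x / (pmf (map_pmf A D) (fst x) * pmf (map_pmf B D) (snd x)))"

definition mi_term :: "'a pmf \<Rightarrow> ('a \<Rightarrow> 't) \<Rightarrow> ('a \<Rightarrow> 'z) \<Rightarrow> 't \<Rightarrow> real" where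
  "mi_term D A B t = (\<Sum>z\<in>UNIV. mi_density D A B (t, z))"

lemma mi_density_abs_summable:
  fixes D :: "'a pmf" and A :: "'a \<Rightarrow> 't::countable" and B :: "'a \<Rightarrow> 'z::finite"
  shows "mi_density D A B abs_summable_on UNIV"
proof -
  define Pab where "Pab = pmf (map_pmf (\<lambda>a. (A a, B a)) D)"
  define Pa where "Pa = pmf (map_pmf A D)"
  define Pb where "Pb = pmf (map_pmf B D)"
  \<comment> \<open>Since B ranges over a finite type, Pab (t, z) / (Pa t * Pb z) is at most 1 / Pb z, which
    yields a summable majorant.\<close>
  define C where "C = (\<lambda>z. if Pb z = 0 then 1 else 1 / Pb z)"
  have C1: "1 \<le> C z" for z
    using pmf_le_1[of "map_pmf B D" z] pmf_nonneg[of "map_pmf B D" z]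
    unfolding C_def Pb_def by (auto simp: field_simps)
  define M where "M = (\<Sum>z\<in>UNIV. log 2 (C z))"
  have logC_le: "log 2 (C z) \<le> M" for z
    unfolding M_def
  proof (rule member_le_sum)
    show "0 \<le> log 2 (C x)" for x using C1[of x] by simp
  qed auto
  have bound: "norm (mi_density D A B x) \<le> M * Pab x + pmf (pair_pmf (map_pmf A D) (map_pmf B D)) x / ln 2"
    for x
  proof -
    obtain t z where x: "x = (t, z)" by (cases x)
    have le: "Pab (t, z) \<le> C z * (Pa t * Pb z)"
      using pmf_map_pair_le_fst[of A B D t z] pmf_map_pair_le_snd[of A B D t z]
        pmf_nonneg[of "map_pmf (\<lambda>a. (A a, B a)) D" "(t, z)"]
      unfolding Pab_def Pa_def Pb_def C_def by auto
    have "norm (mi_density D A B x) \<le> Pab (t, z) * log 2 (C z) + (Pa t * Pb z) / ln 2"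
      using abs_xlog_ratio_le[OF _ _ le C1] by (simp add: mi_density_def x Pab_def Pa_def Pb_def)
    also have "\<dots> \<le> M * Pab x + pmf (pair_pmf (map_pmf A D) (map_pmf B D)) x / ln 2"
      using logC_le[of z] pmf_nonneg[of "map_pmf (\<lambda>a. (A a, B a)) D" "(t, z)"]
      by (simp add: x pmf_pair Pa_def Pb_def Pab_def mult.commute[of _ "log 2 (C z)"] mult_right_mono)
    finally show ?thesis .
  qed
  show ?thesis
  proof (rule abs_summable_on_comparison_test'[OF _ bound])
    show "(\<lambda>x. M * Pab x + pmf (pair_pmf (map_pmf A D) (map_pmf B D)) x / ln 2) abs_summable_on UNIV"
      unfolding Pab_def divide_inverse
      by (intro abs_summable_on_add abs_summable_on_cmult_right abs_summable_on_cmult_left) auto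
  qed
qed

lemma mutual_information_pmf:
  fixes D :: "'a pmf" and A :: "'a \<Rightarrow> 't::countable" and B :: "'a \<Rightarrow> 'z::finite"
  shows "prob_space.mutual_information (measure_pmf D) 2 (count_space UNIV) (count_space UNIV) A B
           = infsetsum (mi_term D A B) UNIV"
    and "mi_term D A B abs_summable_on UNIV"
proof -
  interpret information_space "measure_pmf D" 2 by standard simp
  have pm: "(count_space UNIV \<Otimes>\<^sub>M count_space UNIV :: ('t \<times> 'z) measure) = count_space UNIV"
    by (simp add: pair_measure_countable)
  have "prob_space.mutual_information (measure_pmf D) 2 (count_space UNIV) (count_space UNIV) A B
      = integral\<^sup>L (count_space UNIV \<Otimes>\<^sub>M count_space UNIV) (mi_density D A B)"
    unfolding mi_density_def
    by (rule mutual_information_distr[where S="count_space UNIV" and T="count_space UNIV"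
          and Px="pmf (map_pmf A D)" and Py="pmf (map_pmf B D)"
          and Pxy="pmf (map_pmf (\<lambda>a. (A a, B a)) D)"])
       (auto simp: sigma_finite_measure_count_space distributed_map_pmf pair_measure_countable)
  also have "\<dots> = infsetsum (mi_density D A B) (UNIV \<times> UNIV)"
    unfolding pm infsetsum_def by simp
  also have "\<dots> = infsetsum (mi_term D A B) UNIV"
    using infsetsum_Times[of UNIV UNIV "mi_density D A B"] mi_density_abs_summable[of D A B]
    by (simp add: mi_term_def)
  finally show "prob_space.mutual_information (measure_pmf D) 2 (count_space UNIV) (count_space UNIV) A B
      = infsetsum (mi_term D A B) UNIV" .
  show "mi_term D A B abs_summable_on UNIV"
  proof -
    have "(\<lambda>(t, z). mi_density D A B (t, z)) abs_summable_on UNIV \<times> UNIV"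
      using mi_density_abs_summable[of D A B] by simp
    from abs_summable_on_Sigma_project1'[OF this] show ?thesis by (simp add: mi_term_def)
  qed
qed

lemma cmi_eq_infsetsum:
  fixes D :: "'a pmf" and A :: "'a \<Rightarrow> 't::countable" and B :: "'a \<Rightarrow> 'b::finite"
    and C :: "'a \<Rightarrow> 'c::finite"
  shows "cmi D A B C = infsetsum (mi_term D A (\<lambda>a. (B a, C a))) UNIV - infsetsum (mi_term D A C) UNIV"
proof -
  have "(count_space UNIV \<Otimes>\<^sub>M count_space UNIV :: ('b \<times> 'c) measure) = count_space UNIV"
    by (simp add: pair_measure_countable)
  then show ?thesis
    unfolding cmi_def prob_space.conditional_mutual_information_def[OF measure_pmf.prob_space_axioms]
    by (simp add: mutual_information_pmf(1))
qed

lemma cmi_map_pmf: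
  fixes h :: "'a \<Rightarrow> 'e" and A :: "'e \<Rightarrow> 't::countable" and B :: "'e \<Rightarrow> 'b::finite"
    and C :: "'e \<Rightarrow> 'c::finite"
  shows "cmi (map_pmf h D) A B C = cmi D (\<lambda>x. A (h x)) (\<lambda>x. B (h x)) (\<lambda>x. C (h x))"
  unfolding cmi_eq_infsetsum by (simp add: mi_term_def mi_density_def map_pmf_comp)

definition channel_run :: "('x \<times> 'y \<Rightarrow> 't pmf) \<Rightarrow> ('x \<times> 'y) pmf \<Rightarrow> ('x \<times> 'y \<times> 't) pmf" where
  "channel_run K p = bind_pmf p (\<lambda>z. map_pmf (\<lambda>t. (fst z, snd z, t)) (K z))"

lemma pmf_map_channel_run:
  fixes K :: "('x::finite \<times> 'y::finite) \<Rightarrow> 't pmf"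
  shows "pmf (map_pmf g (channel_run K p)) w
           = (\<Sum>z\<in>UNIV. pmf p z * pmf (map_pmf (\<lambda>t. g (fst z, snd z, t)) (K z)) w)"
  unfolding channel_run_def map_bind_pmf pmf_bind
  by (subst integral_measure_pmf[where A=UNIV]) (auto simp: map_pmf_comp o_def mult.commute)

lemma pmf_channel_run_le:
  fixes K :: "('x::finite \<times> 'y::finite) \<Rightarrow> 't pmf"
  assumes le: "\<And>z. pmf \<nu> z \<le> c * pmf \<mu> z"
  shows "pmf (channel_run K \<nu>) a \<le> c * pmf (channel_run K \<mu>) a"
proof -
  let ?k = "\<lambda>z. pmf (map_pmf (\<lambda>t. (fst z, snd z, t)) (K z)) a"
  have "pmf (channel_run K \<nu>) a = (\<Sum>z\<in>UNIV. pmf \<nu> z * ?k z)"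
    using pmf_map_channel_run[of id K \<nu> a] by simp
  also have "\<dots> \<le> (\<Sum>z\<in>UNIV. c * pmf \<mu> z * ?k z)"
    using le by (intro sum_mono mult_right_mono) auto
  also have "\<dots> = c * pmf (channel_run K \<mu>) a"
    using pmf_map_channel_run[of id K \<mu> a] by (simp add: sum_distrib_left mult.assoc)
  finally show ?thesis .
qed

lemma channel_run_swap:
  "channel_run (\<lambda>z. K (prod.swap z)) (map_pmf prod.swap p) = map_pmf (\<lambda>(x, y, t). (y, x, t)) (channel_run K p)"
  unfolding channel_run_def by (simp add: bind_map_pmf map_bind_pmf map_pmf_comp o_def case_prod_unfold)

lemma cmi_channel_run_swap:
  fixes K :: "('x::finite \<times> 'y::finite) \<Rightarrow> 't::countable pmf"
  shows "cmi (channel_run K p) (\<lambda>(x, y, t). t) (\<lambda>(x, y, t). y) (\<lambda>(x, y, t). x)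
       = cmi (channel_run (\<lambda>z. K (prod.swap z)) (map_pmf prod.swap p))
           (\<lambda>(x, y, t). t) (\<lambda>(x, y, t). x) (\<lambda>(x, y, t). y)"
  unfolding channel_run_swap cmi_map_pmf by (simp add: case_prod_unfold)

definition prob_Y :: "('x \<times> 'y) pmf \<Rightarrow> 'y \<Rightarrow> real" where
  "prob_Y p y = (\<Sum>z\<in>UNIV. if snd z = y then pmf p z else 0)"

lemma prob_Y_nonneg: "0 \<le> prob_Y p y"
  unfolding prob_Y_def by (intro sum_nonneg) auto

lemma prob_Y_ge: "pmf p z \<le> prob_Y p (snd (z :: 'x::finite \<times> 'y::finite))"
  unfolding prob_Y_def
  using member_le_sum[of z UNIV "\<lambda>z'. if snd z' = snd z then pmf p z' else 0"] by simp

lemma prob_Y_eq_0_abs_cont: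
  fixes \<mu> \<nu> :: "('x::finite \<times> 'y::finite) pmf"
  assumes ac: "\<And>z. pmf \<mu> z = 0 \<Longrightarrow> pmf \<nu> z = 0" and "prob_Y \<mu> y = 0"
  shows "prob_Y \<nu> y = 0"
proof -
  have "pmf \<mu> z = 0" if "snd z = y" for z
    using prob_Y_ge[of \<mu> z] pmf_nonneg[of \<mu> z] assms(2) that by simp
  then show ?thesis unfolding prob_Y_def using ac by (intro sum.neutral) auto
qed

context
  fixes K :: "('x::finite \<times> 'y::finite) \<Rightarrow> 't::countable pmf"
begin

definition prob_T :: "('x \<times> 'y) pmf \<Rightarrow> 't \<Rightarrow> real" where
  "prob_T p t = (\<Sum>z\<in>UNIV. pmf p z * pmf (K z) t)"

definition prob_TY :: "('x \<times> 'y) pmf \<Rightarrow> 't \<Rightarrow> 'y \<Rightarrow> real" where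
  "prob_TY p t y = (\<Sum>z\<in>UNIV. if snd z = y then pmf p z * pmf (K z) t else 0)"

(* Q_y t = prob_TY p t y / prob_Y p y is the law of the channel output given Y = y under p, so
   llr is the log-likelihood ratio of K_z against Q_(snd z) and cond_div p z = D(K_z || Q_(snd z)). *)
definition llr :: "('x \<times> 'y) pmf \<Rightarrow> ('x \<times> 'y) \<Rightarrow> 't \<Rightarrow> real" where
  "llr p z t = log 2 (pmf (K z) t * prob_Y p (snd z) / prob_TY p t (snd z))"

definition cond_div :: "('x \<times> 'y) pmf \<Rightarrow> ('x \<times> 'y) \<Rightarrow> real" where
  "cond_div p z = infsetsum (\<lambda>t. pmf (K z) t * llr p z t) UNIV"

definition weighted_llr :: "('x \<times> 'y) pmf \<Rightarrow> ('x \<times> 'y) pmf \<Rightarrow> 't \<Rightarrow> real" where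
  "weighted_llr p q t = (\<Sum>z\<in>UNIV. pmf q z * (pmf (K z) t * llr p z t))"

lemma prob_TY_nonneg: "0 \<le> prob_TY p t y"
  unfolding prob_TY_def by (intro sum_nonneg) auto

lemma prob_TY_ge: "pmf p z * pmf (K z) t \<le> prob_TY p t (snd z)"
  unfolding prob_TY_def
  using member_le_sum[of z UNIV "\<lambda>z'. if snd z' = snd z then pmf p z' * pmf (K z') t else 0"]
  by simp

lemma prob_T_ge: "pmf p z * pmf (K z) t \<le> prob_T p t"
  unfolding prob_T_def by (rule member_le_sum) auto

lemma prob_TY_pos:
  assumes "0 < pmf p z" "0 < pmf (K z) t"
  shows "0 < prob_TY p t (snd z)"
  using prob_TY_ge[of p z t] assms by (smt (verit) mult_pos_pos)

lemma prob_TY_pos_obtain: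
  assumes "0 < prob_TY p t y"
  obtains z where "snd z = y" "0 < pmf p z" "0 < pmf (K z) t"
proof -
  have "\<exists>z. snd z = y \<and> pmf p z * pmf (K z) t \<noteq> 0"
  proof (rule ccontr)
    assume "\<not> ?thesis"
    then have "prob_TY p t y = 0" unfolding prob_TY_def by (intro sum.neutral) auto
    then show False using assms by simp
  qed
  then show ?thesis using that pmf_nonneg[of p] pmf_nonneg[of "K _" t] by (auto simp: less_le)
qed

lemma mi_term_channel_run_XY:
  "mi_term (channel_run K p) (\<lambda>(x, y, t). t) (\<lambda>a. ((\<lambda>(x, y, t). x) a, (\<lambda>(x, y, t). y) a)) t
     = (\<Sum>z\<in>UNIV. (pmf p z * pmf (K z) t) * log 2 ((pmf p z * pmf (K z) t) / (prob_T p t * pmf p z)))"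
proof -
  have joint: "pmf (map_pmf (\<lambda>a. ((\<lambda>(x, y, t). t) a, ((\<lambda>(x, y, t). x) a, (\<lambda>(x, y, t). y) a)))
      (channel_run K p)) (t, z) = pmf p z * pmf (K z) t" for z
    unfolding pmf_map_channel_run by (simp add: pmf_map_pair_const if_distrib cong: if_cong)
  have T: "pmf (map_pmf (\<lambda>(x, y, t). t) (channel_run K p)) t = prob_T p t"
    unfolding pmf_map_channel_run prob_T_def by (simp add: split_beta)
  have XY: "pmf (map_pmf (\<lambda>a. ((\<lambda>(x, y, t). x) a, (\<lambda>(x, y, t). y) a)) (channel_run K p)) z = pmf p z" for z
    unfolding pmf_map_channel_run by (simp add: split_beta map_pmf_const)
  show ?thesis unfolding mi_term_def mi_density_def fst_conv snd_conv joint T XY ..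
qed

lemma mi_term_channel_run_Y:
  "mi_term (channel_run K p) (\<lambda>(x, y, t). t) (\<lambda>(x, y, t). y) t
     = (\<Sum>z\<in>UNIV. (pmf p z * pmf (K z) t) * log 2 (prob_TY p t (snd z) / (prob_T p t * prob_Y p (snd z))))"
proof -
  have joint: "pmf (map_pmf (\<lambda>a. ((\<lambda>(x, y, t). t) a, (\<lambda>(x, y, t). y) a)) (channel_run K p)) (t, y)
        = prob_TY p t y" for y
    unfolding pmf_map_channel_run prob_TY_def
    by (auto simp: pmf_map_pair_const split_beta intro!: sum.cong)
  have T: "pmf (map_pmf (\<lambda>(x, y, t). t) (channel_run K p)) t = prob_T p t"
    unfolding pmf_map_channel_run prob_T_def by (simp add: split_beta)
  have Y: "pmf (map_pmf (\<lambda>(x, y, t). y) (channel_run K p)) y = prob_Y p y" for y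
    unfolding pmf_map_channel_run prob_Y_def
    by (intro sum.cong) (auto simp: split_beta map_pmf_const pmf_return)
  show ?thesis unfolding mi_term_def mi_density_def fst_conv snd_conv joint T Y prob_TY_def
    by (rule sum_regroup_snd)
qed

lemma mi_term_channel_run_diff:
  "mi_term (channel_run K p) (\<lambda>(x, y, t). t) (\<lambda>a. ((\<lambda>(x, y, t). x) a, (\<lambda>(x, y, t). y) a)) t
     - mi_term (channel_run K p) (\<lambda>(x, y, t). t) (\<lambda>(x, y, t). y) t
   = weighted_llr p p t"
  unfolding mi_term_channel_run_XY mi_term_channel_run_Y weighted_llr_def sum_subtractf[symmetric]
proof (rule sum.cong)
  fix z :: "'x \<times> 'y"
  show "(pmf p z * pmf (K z) t) * log 2 ((pmf p z * pmf (K z) t) / (prob_T p t * pmf p z))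
      - (pmf p z * pmf (K z) t) * log 2 (prob_TY p t (snd z) / (prob_T p t * prob_Y p (snd z)))
      = pmf p z * (pmf (K z) t * llr p z t)"
  proof (cases "pmf p z * pmf (K z) t = 0")
    case False
    then have p: "0 < pmf p z" and k: "0 < pmf (K z) t"
      using pmf_nonneg[of p z] pmf_nonneg[of "K z" t] by (auto simp: less_le)
    have "0 < prob_T p t" using prob_T_ge[of p z t] p k by (smt (verit) mult_pos_pos)
    moreover have "0 < prob_TY p t (snd z)" using prob_TY_pos[OF p k] .
    moreover have "0 < prob_Y p (snd z)" using prob_Y_ge[of p z] p by linarith
    ultimately show ?thesis unfolding llr_def using p k
      by (simp add: log_mult log_divide algebra_simps)
  qed auto
qed simp

lemma cmi_channel_run_weighted_llr:
  "cmi (channel_run K p) (\<lambda>(x, y, t). t) (\<lambda>(x, y, t). x) (\<lambda>(x, y, t). y)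
     = infsetsum (weighted_llr p p) UNIV"
proof -
  let ?XY = "mi_term (channel_run K p) (\<lambda>(x, y, t). t) (\<lambda>a. ((\<lambda>(x, y, t). x) a, (\<lambda>(x, y, t). y) a))"
  and ?Y = "mi_term (channel_run K p) (\<lambda>(x, y, t). t) (\<lambda>(x, y, t). y)"
  have "weighted_llr p p = (\<lambda>t. ?XY t - ?Y t)"
    by (simp add: fun_eq_iff mi_term_channel_run_diff)
  then show ?thesis unfolding cmi_eq_infsetsum
    by (simp add: infsetsum_diff mutual_information_pmf(2))
qed

lemma prob_TY_summable: "(\<lambda>t. prob_TY p t y) abs_summable_on UNIV"
  unfolding prob_TY_def
proof (rule abs_summable_sum)
  fix z :: "'x \<times> 'y"
  show "(\<lambda>t. if snd z = y then pmf p z * pmf (K z) t else 0) abs_summable_on UNIV"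
    by (cases "snd z = y") (auto intro: abs_summable_on_cmult_right)
qed

lemma infsetsum_prob_TY: "infsetsum (\<lambda>t. prob_TY p t y) UNIV = prob_Y p y"
proof -
  have summable: "(\<lambda>t. if snd z = y then pmf p z * pmf (K z) t else 0) abs_summable_on UNIV" for z
    by (cases "snd z = y") (auto intro: abs_summable_on_cmult_right)
  have "infsetsum (\<lambda>t. prob_TY p t y) UNIV
      = (\<Sum>z\<in>UNIV. infsetsum (\<lambda>t. if snd z = y then pmf p z * pmf (K z) t else 0) UNIV)"
    unfolding prob_TY_def by (rule sum_infsetsum[symmetric]) (use summable in auto)
  also have "\<dots> = prob_Y p y" unfolding prob_Y_def
    by (intro sum.cong) (auto simp: infsetsum_cmult_right pmf_abs_summable infsetsum_pmf_eq_1)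
  finally show ?thesis .
qed

lemma llr_bound:
  assumes pz: "0 < pmf p z"
  shows "norm (pmf (K z) t * llr p z t)
           \<le> pmf (K z) t * log 2 (prob_Y p (snd z) / pmf p z) + prob_TY p t (snd z) / (prob_Y p (snd z) * ln 2)"
proof -
  let ?k = "pmf (K z) t" and ?y = "prob_Y p (snd z)" and ?q = "prob_TY p t (snd z)"
  let ?c = "prob_Y p (snd z) / pmf p z"
  have y: "0 < ?y" using prob_Y_ge[of p z] pz by linarith
  have c1: "1 \<le> ?c" using prob_Y_ge[of p z] pz by simp
  have "?k * ?y = ?c * (pmf p z * ?k)" using pz by (simp add: field_simps)
  also have "\<dots> \<le> ?c * ?q" using prob_TY_ge[of p z t] c1 by (intro mult_left_mono) auto
  finally have le: "?k * ?y \<le> ?c * ?q" .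
  have "norm (?k * llr p z t) = \<bar>(?k * ?y) * log 2 ((?k * ?y) / ?q)\<bar> / ?y"
    unfolding llr_def using y by (simp add: abs_mult)
  also have "\<dots> \<le> ((?k * ?y) * log 2 ?c + ?q / ln 2) / ?y"
    using abs_xlog_ratio_le[OF _ prob_TY_nonneg le c1] y by (intro divide_right_mono) auto
  also have "\<dots> = ?k * log 2 ?c + ?q / (?y * ln 2)"
    using y by (simp add: field_simps)
  finally show ?thesis .
qed

lemma llr_summable:
  assumes "0 < pmf p z"
  shows "(\<lambda>t. pmf (K z) t * llr p z t) abs_summable_on UNIV"
proof (rule abs_summable_on_comparison_test'[OF _ llr_bound[OF assms]])
  show "(\<lambda>t. pmf (K z) t * log 2 (prob_Y p (snd z) / pmf p z)
            + prob_TY p t (snd z) / (prob_Y p (snd z) * ln 2)) abs_summable_on UNIV"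
    unfolding divide_inverse
    by (intro abs_summable_on_add abs_summable_on_cmult_left prob_TY_summable) auto
qed

lemma cond_div_nonneg:
  assumes pz: "0 < pmf p z"
  shows "0 \<le> cond_div p z"
proof -
  let ?y = "prob_Y p (snd z)" and ?Q = "\<lambda>t. prob_TY p t (snd z) / prob_Y p (snd z)"
  have y: "0 < ?y" using prob_Y_ge[of p z] pz by linarith
  have pointwise: "- (pmf (K z) t * llr p z t) \<le> (?Q t - pmf (K z) t) / ln 2" for t
  proof (cases "pmf (K z) t = 0")
    case False
    then have k: "0 < pmf (K z) t" using pmf_nonneg[of "K z" t] by linarith
    have q: "0 < prob_TY p t (snd z)" by (rule prob_TY_pos[OF pz k])
    have "- (pmf (K z) t * llr p z t) = pmf (K z) t * log 2 (?Q t / pmf (K z) t)"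
      unfolding llr_def using k q y by (simp add: log_divide log_mult algebra_simps)
    also have "\<dots> \<le> (?Q t - pmf (K z) t) / ln 2"
      using q y by (intro xlog_ratio_le) auto
    finally show ?thesis .
  qed (simp add: prob_TY_nonneg prob_Y_nonneg)
  have Q_summable: "?Q abs_summable_on UNIV"
    unfolding divide_inverse by (intro abs_summable_on_cmult_left prob_TY_summable)
  have "- cond_div p z \<le> infsetsum (\<lambda>t. (?Q t - pmf (K z) t) / ln 2) UNIV"
    unfolding cond_div_def infsetsum_uminus[symmetric]
    using llr_summable[OF pz] Q_summable
    by (intro infsetsum_mono pointwise)
       (auto simp: divide_inverse intro!: abs_summable_on_cmult_left abs_summable_on_diff)
  also have "\<dots> = (infsetsum ?Q UNIV - infsetsum (pmf (K z)) UNIV) / ln 2"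
    unfolding divide_inverse[of _ "ln 2"] using Q_summable
    by (subst infsetsum_cmult_left) (auto simp: infsetsum_diff pmf_abs_summable intro!: abs_summable_on_diff)
  also have "infsetsum ?Q UNIV = infsetsum (\<lambda>t. prob_TY p t (snd z)) UNIV / ?y"
    unfolding divide_inverse[of _ ?y] by (rule infsetsum_cmult_left) (rule prob_TY_summable)
  finally show ?thesis using y by (simp add: infsetsum_prob_TY infsetsum_pmf_eq_1)
qed

lemma weighted_llr_term_summable:
  assumes ac: "\<And>z. pmf p z = 0 \<Longrightarrow> pmf q z = 0"
  shows "(\<lambda>t. pmf q z * (pmf (K z) t * llr p z t)) abs_summable_on UNIV"
proof (cases "pmf p z = 0")
  case False
  then have "0 < pmf p z" using pmf_nonneg[of p z] by linarith
  then show ?thesis by (intro abs_summable_on_cmult_right llr_summable)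
qed (simp add: ac)

lemma weighted_llr_summable:
  assumes "\<And>z. pmf p z = 0 \<Longrightarrow> pmf q z = 0"
  shows "weighted_llr p q abs_summable_on UNIV"
  unfolding weighted_llr_def using weighted_llr_term_summable[OF assms] by (rule abs_summable_sum)

lemma infsetsum_weighted_llr:
  assumes ac: "\<And>z. pmf p z = 0 \<Longrightarrow> pmf q z = 0"
  shows "infsetsum (weighted_llr p q) UNIV = (\<Sum>z\<in>UNIV. pmf q z * cond_div p z)"
proof -
  have "infsetsum (weighted_llr p q) UNIV
      = (\<Sum>z\<in>UNIV. infsetsum (\<lambda>t. pmf q z * (pmf (K z) t * llr p z t)) UNIV)"
    unfolding weighted_llr_def
    by (intro sum_infsetsum[symmetric] weighted_llr_term_summable[OF ac])
  also have "\<dots> = (\<Sum>z\<in>UNIV. pmf q z * cond_div p z)"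
    unfolding cond_div_def
  proof (intro sum.cong infsetsum_cmult_right llr_summable)
    show "0 < pmf p z" if "pmf q z \<noteq> 0" for z
      using ac[of z] that pmf_nonneg[of p z] by (metis less_le)
  qed simp
  finally show ?thesis .
qed

lemma cmi_channel_run:
  "cmi (channel_run K p) (\<lambda>(x, y, t). t) (\<lambda>(x, y, t). x) (\<lambda>(x, y, t). y)
     = (\<Sum>z\<in>UNIV. pmf p z * cond_div p z)"
  unfolding cmi_channel_run_weighted_llr by (rule infsetsum_weighted_llr) simp

(* The termwise bound given by ln x <= x - 1 when Q_y computed under nu is compared with Q_y
   computed under mu; it sums to 0 over t. *)
definition gibbs_slack :: "('x \<times> 'y) pmf \<Rightarrow> ('x \<times> 'y) pmf \<Rightarrow> 't \<Rightarrow> real" where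
  "gibbs_slack \<mu> \<nu> t =
     (\<Sum>y\<in>UNIV. (prob_Y \<nu> y / prob_Y \<mu> y * prob_TY \<mu> t y - prob_TY \<nu> t y) / ln 2)"

lemma weighted_llr_diff:
  assumes ac: "\<And>z. pmf \<mu> z = 0 \<Longrightarrow> pmf \<nu> z = 0"
  shows "weighted_llr \<nu> \<nu> t - weighted_llr \<mu> \<nu> t
    = (\<Sum>y\<in>UNIV. prob_TY \<nu> t y * log 2 ((prob_Y \<nu> y / prob_Y \<mu> y * prob_TY \<mu> t y) / prob_TY \<nu> t y))"
    (is "_ = (\<Sum>y\<in>UNIV. prob_TY \<nu> t y * ?R y)")
proof -
  have "weighted_llr \<nu> \<nu> t - weighted_llr \<mu> \<nu> t = (\<Sum>z\<in>UNIV. (pmf \<nu> z * pmf (K z) t) * ?R (snd z))"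
    unfolding weighted_llr_def sum_subtractf[symmetric]
  proof (rule sum.cong)
    fix z :: "'x \<times> 'y"
    show "pmf \<nu> z * (pmf (K z) t * llr \<nu> z t) - pmf \<nu> z * (pmf (K z) t * llr \<mu> z t)
        = (pmf \<nu> z * pmf (K z) t) * ?R (snd z)"
    proof (cases "pmf \<nu> z * pmf (K z) t = 0")
      case False
      then have v: "0 < pmf \<nu> z" and k: "0 < pmf (K z) t"
        using pmf_nonneg[of \<nu> z] pmf_nonneg[of "K z" t] by (auto simp: less_le)
      have m: "0 < pmf \<mu> z" using ac[of z] v pmf_nonneg[of \<mu> z] by (metis less_le less_irrefl)
      have "0 < prob_Y \<nu> (snd z)" "0 < prob_Y \<mu> (snd z)"
        using prob_Y_ge[of \<nu> z] prob_Y_ge[of \<mu> z] v m by linarith+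
      then show ?thesis unfolding llr_def using v k prob_TY_pos[OF v k] prob_TY_pos[OF m k]
        by (simp add: log_mult log_divide algebra_simps)
    qed auto
  qed simp
  also have "\<dots> = (\<Sum>y\<in>UNIV. prob_TY \<nu> t y * ?R y)"
    unfolding prob_TY_def by (rule sum_regroup_snd[symmetric])
  finally show ?thesis .
qed

lemma weighted_llr_le_gibbs_slack:
  assumes ac: "\<And>z. pmf \<mu> z = 0 \<Longrightarrow> pmf \<nu> z = 0"
  shows "weighted_llr \<nu> \<nu> t \<le> weighted_llr \<mu> \<nu> t + gibbs_slack \<mu> \<nu> t"
proof -
  have "weighted_llr \<nu> \<nu> t - weighted_llr \<mu> \<nu> t
    = (\<Sum>y\<in>UNIV. prob_TY \<nu> t y * log 2 ((prob_Y \<nu> y / prob_Y \<mu> y * prob_TY \<mu> t y) / prob_TY \<nu> t y))"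
    by (rule weighted_llr_diff[OF ac])
  also have "\<dots> \<le> gibbs_slack \<mu> \<nu> t"
    unfolding gibbs_slack_def
  proof (intro sum_mono xlog_ratio_le)
    fix y :: 'y
    show "0 \<le> prob_Y \<nu> y / prob_Y \<mu> y * prob_TY \<mu> t y"
      using prob_Y_nonneg[of \<nu> y] prob_Y_nonneg[of \<mu> y] prob_TY_nonneg[of \<mu> t y] by simp
    assume "0 < prob_TY \<nu> t y"
    then obtain z where z: "snd z = y" "0 < pmf \<nu> z" "0 < pmf (K z) t" by (rule prob_TY_pos_obtain)
    have m: "0 < pmf \<mu> z" using ac[of z] z(2) pmf_nonneg[of \<mu> z] by (metis less_le less_irrefl)
    have "0 < prob_Y \<nu> (snd z)" "0 < prob_Y \<mu> (snd z)"
      using prob_Y_ge[of \<nu> z] prob_Y_ge[of \<mu> z] z(2) m by linarith+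
    with prob_TY_pos[OF m z(3)] z(1) show "0 < prob_Y \<nu> y / prob_Y \<mu> y * prob_TY \<mu> t y" by simp
  qed (rule prob_TY_nonneg)
  finally show ?thesis by simp
qed

lemma gibbs_slack_summable: "gibbs_slack \<mu> \<nu> abs_summable_on UNIV"
  unfolding gibbs_slack_def divide_inverse[of _ "ln 2"]
  by (intro abs_summable_sum abs_summable_on_cmult_left abs_summable_on_diff
      abs_summable_on_cmult_right prob_TY_summable)

lemma infsetsum_gibbs_slack:
  assumes ac: "\<And>z. pmf \<mu> z = 0 \<Longrightarrow> pmf \<nu> z = 0"
  shows "infsetsum (gibbs_slack \<mu> \<nu>) UNIV = 0"
proof -
  have "infsetsum (\<lambda>t. (prob_Y \<nu> y / prob_Y \<mu> y * prob_TY \<mu> t y - prob_TY \<nu> t y) / ln 2) UNIV = 0"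
    for y :: 'y
  proof -
    let ?r = "prob_Y \<nu> y / prob_Y \<mu> y"
    have scaled_summable: "(\<lambda>t. ?r * prob_TY \<mu> t y) abs_summable_on UNIV"
      by (intro abs_summable_on_cmult_right prob_TY_summable)
    have "infsetsum (\<lambda>t. (?r * prob_TY \<mu> t y - prob_TY \<nu> t y) / ln 2) UNIV
        = (infsetsum (\<lambda>t. ?r * prob_TY \<mu> t y) UNIV - infsetsum (\<lambda>t. prob_TY \<nu> t y) UNIV) / ln 2"
      unfolding divide_inverse[of _ "ln 2"] using scaled_summable prob_TY_summable
      by (subst infsetsum_cmult_left) (auto simp: infsetsum_diff intro: abs_summable_on_diff)
    also have "infsetsum (\<lambda>t. ?r * prob_TY \<mu> t y) UNIV = ?r * prob_Y \<mu> y"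
      by (subst infsetsum_cmult_right) (simp_all add: prob_TY_summable infsetsum_prob_TY)
    also have "?r * prob_Y \<mu> y = prob_Y \<nu> y"
      using prob_Y_eq_0_abs_cont[of \<mu> \<nu>, OF ac] by (cases "prob_Y \<mu> y = 0") simp_all
    finally show ?thesis by (simp add: infsetsum_prob_TY)
  qed
  then show ?thesis unfolding gibbs_slack_def
    by (subst sum_infsetsum[symmetric])
       (auto simp: divide_inverse intro!: abs_summable_on_cmult_left abs_summable_on_diff
         abs_summable_on_cmult_right prob_TY_summable)
qed

lemma expected_cond_div_le:
  assumes ac: "\<And>z. pmf \<mu> z = 0 \<Longrightarrow> pmf \<nu> z = 0"
  shows "(\<Sum>z\<in>UNIV. pmf \<nu> z * cond_div \<nu> z) \<le> (\<Sum>z\<in>UNIV. pmf \<nu> z * cond_div \<mu> z)"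
proof -
  have "(\<Sum>z\<in>UNIV. pmf \<nu> z * cond_div \<nu> z) = infsetsum (weighted_llr \<nu> \<nu>) UNIV"
    by (rule infsetsum_weighted_llr[symmetric]) simp
  also have "\<dots> \<le> infsetsum (\<lambda>t. weighted_llr \<mu> \<nu> t + gibbs_slack \<mu> \<nu> t) UNIV"
    using weighted_llr_summable[of \<nu> \<nu>] weighted_llr_summable[OF ac] gibbs_slack_summable
    by (intro infsetsum_mono weighted_llr_le_gibbs_slack[OF ac] abs_summable_on_add) auto
  also have "\<dots> = infsetsum (weighted_llr \<mu> \<nu>) UNIV"
    using weighted_llr_summable[OF ac] gibbs_slack_summable
    by (simp add: infsetsum_add infsetsum_gibbs_slack[OF ac])
  also have "\<dots> = (\<Sum>z\<in>UNIV. pmf \<nu> z * cond_div \<mu> z)"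
    by (rule infsetsum_weighted_llr[OF ac])
  finally show ?thesis .
qed

lemma cmi_channel_run_le:
  assumes le: "\<And>z. pmf \<nu> z \<le> c * pmf \<mu> z"
  shows "cmi (channel_run K \<nu>) (\<lambda>(x, y, t). t) (\<lambda>(x, y, t). x) (\<lambda>(x, y, t). y)
     \<le> c * cmi (channel_run K \<mu>) (\<lambda>(x, y, t). t) (\<lambda>(x, y, t). x) (\<lambda>(x, y, t). y)"
proof -
  have ac: "pmf \<nu> z = 0" if "pmf \<mu> z = 0" for z
    using le[of z] pmf_nonneg[of \<nu> z] that by simp
  have "cmi (channel_run K \<nu>) (\<lambda>(x, y, t). t) (\<lambda>(x, y, t). x) (\<lambda>(x, y, t). y)
      \<le> (\<Sum>z\<in>UNIV. pmf \<nu> z * cond_div \<mu> z)"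
    unfolding cmi_channel_run by (rule expected_cond_div_le[OF ac])
  also have "\<dots> \<le> (\<Sum>z\<in>UNIV. c * (pmf \<mu> z * cond_div \<mu> z))"
  proof (rule sum_mono)
    fix z :: "'x \<times> 'y"
    show "pmf \<nu> z * cond_div \<mu> z \<le> c * (pmf \<mu> z * cond_div \<mu> z)"
    proof (cases "pmf \<mu> z = 0")
      case False
      then have "0 \<le> cond_div \<mu> z" using pmf_nonneg[of \<mu> z] by (intro cond_div_nonneg) linarith
      then have "pmf \<nu> z * cond_div \<mu> z \<le> c * pmf \<mu> z * cond_div \<mu> z"
        using le[of z] by (rule mult_right_mono[rotated])
      then show ?thesis by (simp add: mult.assoc)
    qed (simp add: ac)
  qed
  also have "\<dots> = c * cmi (channel_run K \<mu>) (\<lambda>(x, y, t). t) (\<lambda>(x, y, t). x) (\<lambda>(x, y, t). y)"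
    by (simp add: cmi_channel_run sum_distrib_left)
  finally show ?thesis .
qed

end

definition transcript_pmf :: "('x, 'y, 'o) protocol \<Rightarrow> 'x \<times> 'y \<Rightarrow> (nat \<times> bool list) pmf" where
  "transcript_pmf P z =
     bind_pmf (pub P) (\<lambda>r. bind_pmf (privA P) (\<lambda>ra. bind_pmf (privB P) (\<lambda>rb.
       return_pmf (r, msgs P (fst z) (snd z) r ra rb (rounds P)))))"

lemma run_eq_channel_run: "run P p = channel_run (transcript_pmf P) p"
  unfolding run_def channel_run_def transcript_pmf_def by (simp add: map_bind_pmf case_prod_unfold)

lemma internal_info_le_of_pmf_le:
  fixes P :: "('x::finite, 'y::finite, 'o) protocol"
  assumes le: "\<And>z. pmf \<nu> z \<le> c * pmf \<mu> z"
  shows "internal_info P \<nu> \<le> c * internal_info P \<mu>"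
proof -
  have le_swap: "pmf (map_pmf prod.swap \<nu>) z \<le> c * pmf (map_pmf prod.swap \<mu>) z" for z
    unfolding pmf_map_swap by (rule le)
  show ?thesis
    unfolding internal_info_def run_eq_channel_run cmi_channel_run_swap
    using cmi_channel_run_le[OF le, of "transcript_pmf P"]
      cmi_channel_run_le[OF le_swap, of "\<lambda>z. transcript_pmf P (prod.swap z)"]
    by (simp add: distrib_left)
qed

lemma err_le_of_pmf_le:
  fixes P :: "('x::finite, 'y::finite, 'o) protocol"
  assumes le: "\<And>z. pmf \<nu> z \<le> c * pmf \<mu> z"
  shows "err P \<nu> f \<le> c * err P \<mu> f"
proof -
  let ?E = "{(x, y, t). outp P (fst t) (snd t) \<noteq> f x y}"
  have "err P \<nu> f = infsetsum (pmf (run P \<nu>)) ?E"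
    unfolding err_def by (rule measure_pmf_conv_infsetsum)
  also have "\<dots> \<le> infsetsum (\<lambda>a. c * pmf (run P \<mu>) a) ?E"
    unfolding run_eq_channel_run
    by (intro infsetsum_mono pmf_channel_run_le[OF le] abs_summable_on_cmult_right) auto
  also have "\<dots> = c * err P \<mu> f"
    unfolding err_def measure_pmf_conv_infsetsum by (rule infsetsum_cmult_right) auto
  finally show ?thesis .
qed

lemma IC_internal_le_of_pmf_le:
  fixes f :: "'x::finite \<Rightarrow> 'y::finite \<Rightarrow> 'o"
  assumes "0 < c" and le: "\<And>z. pmf \<nu> z \<le> c * pmf \<mu> z"
  shows "IC_internal \<nu> f (c * eps) \<le> ereal c * IC_internal \<mu> f eps"
proof -
  let ?S = "\<lambda>w. \<exists>P :: ('x, 'y, 'o) protocol. w = ereal (internal_info P \<mu>) \<and> err P \<mu> f \<le> eps"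
  have "IC_internal \<nu> f (c * eps) \<le> Inf {ereal c * w | w. ?S w}"
  proof (rule Inf_greatest)
    fix v assume "v \<in> {ereal c * w | w. ?S w}"
    then obtain P :: "('x, 'y, 'o) protocol"
      where v: "v = ereal c * ereal (internal_info P \<mu>)" and err: "err P \<mu> f \<le> eps"
      by blast
    have "err P \<nu> f \<le> c * eps"
      using order_trans[OF err_le_of_pmf_le[OF le, of P f] mult_left_mono[OF err]] \<open>0 < c\<close> by simp
    then have "IC_internal \<nu> f (c * eps) \<le> ereal (internal_info P \<nu>)"
      unfolding IC_internal_def by (intro Inf_lower) blast
    also have "\<dots> \<le> v" unfolding v using internal_info_le_of_pmf_le[OF le, of P] by simp
    finally show "IC_internal \<nu> f (c * eps) \<le> v" .
  qed
  also have "\<dots> = ereal c * Inf {w. ?S w}"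
    by (rule ereal_Inf_cmult[OF \<open>0 < c\<close>])
  also have "Inf {w. ?S w} = IC_internal \<mu> f eps"
    unfolding IC_internal_def by (rule arg_cong[where f=Inf]) blast
  finally show ?thesis .
qed

lemma pmf_mix_pmf_le_twice_mix_half:
  assumes "0 \<le> lam" "lam \<le> 1"
  shows "pmf (mix_pmf lam mu0 mu1) z \<le> 2 * pmf (mix_pmf (1/2) mu0 mu1) z"
proof -
  have pmf_mix: "pmf (mix_pmf a mu0 mu1) z = a * pmf mu0 z + (1 - a) * pmf mu1 z"
    if "0 \<le> a" "a \<le> 1" for a
    unfolding mix_pmf_def using that by (simp add: pmf_bind)
  have "lam * pmf mu0 z \<le> pmf mu0 z" "(1 - lam) * pmf mu1 z \<le> pmf mu1 z"
    using assms by (simp_all add: mult_left_le_one_le)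
  then show ?thesis using pmf_mix[of lam] pmf_mix[of "1/2"] assms by simp
qed

theorem fact4p3:
  fixes f :: "'x::finite \<Rightarrow> 'y::finite \<Rightarrow> 'o"
    and mu0 mu1 :: "('x \<times> 'y) pmf"
    and lam eps :: real
  assumes "0 \<le> lam" and "lam \<le> 1" and "0 \<le> eps"
  shows "IC_internal (mix_pmf lam mu0 mu1) f (2 * eps)
           \<le> 2 * IC_internal (mix_pmf (1/2) mu0 mu1) f eps + 6"
proof -
  have "IC_internal (mix_pmf lam mu0 mu1) f (2 * eps) \<le> 2 * IC_internal (mix_pmf (1/2) mu0 mu1) f eps"
    using IC_internal_le_of_pmf_le[of 2, OF _ pmf_mix_pmf_le_twice_mix_half[OF assms(1,2)]] by simp
  also have "\<dots> \<le> 2 * IC_internal (mix_pmf (1/2) mu0 mu1) f eps + 6"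
    by (cases "2 * IC_internal (mix_pmf (1/2) mu0 mu1) f eps") simp_all
  finally show ?thesis .
qed

end
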